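(* Let $t_1<\tau$ be fixed independently of $z$, and for each $z$ let $\mathbf y(t)$ and $\mathbf x_h(t)$ satisfy $$\frac{d}{dt}\mathbf y=\mathbf A\mathbf y+h(\mathbf y)+\mathbf e_{\mathbf y},\qquad \frac{d}{dt}\mathbf x_h=\mathbf A\mathbf x_h+h(\mathbf x_h),\qquad \mathbf x_h(t_1)=\mathbf y(t_1),$$ where $\sup_{t\in[t_1,\tau]}\|\mathbf e_{\mathbf y}(t)\|=O(z^{-1})$, and $h:\mathbb R^4\to\mathbb R^4$ is such that for all $\mathbf x_1,\mathbf x_2$, $h(\mathbf x_1)-h(\mathbf x_2)=\mathbf L_h(\mathbf x_1,\mathbf x_2)(\mathbf x_1-\mathbf x_2)$ for a $4\times4$ matrix $\mathbf L_h(\mathbf x_1,\mathbf x_2)$ whose entries satisfy $|[\mathbf L_h(\mathbf x_1,\mathbf x_2)]_{ij}|\le L_h$, with $L_h>0$ a constant independent of $z$. Then $$\sup_{t\in[t_1,\tau]}\|\mathbf y(t)-\mathbf x_h(t)\|=O(z^{-1}).$$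
   Context: $\mathbf A=\begin{bmatrix}-1&3z&z&z\\0&-3z&0&0\\0&2z&-z&0\\1&0&0&-z\end{bmatrix}$ for $z>0$. $O(z^{-1})$ means bounded by $Kz^{-1}$ with $K$ independent of $z$, for all sufficiently large $z$. *)

theory Defs
  imports "HOL-Analysis.Analysis"
begin

text \<open>Rows/columns indexed by the elements 1,2,3,4 of the numeral type 4
(note 4 = 0 in that type, so index 4 is the last one in the paper's ordering).\<close>

definition matA :: "real \<Rightarrow> real^4^4" where
  "matA z = (\<chi> i j.
     if i = 1 then (if j = 1 then -1 else if j = 2 then 3*z else if j = 3 then z else z)
     else if i = 2 then (if j = 2 then -3*z else 0)
     else if i = 3 then (if j = 2 then 2*z else if j = 3 then -z else 0)
     else (if j = 1 then 1 else if j = 4 then -z else 0))"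

end

theory Submission
  imports Defs
begin

(* The difference d = y - x_h solves the linear system d' = A d + r with
   r = L_h(y, x_h) d + e, whose entries are controlled by L_h |d|_1 + |e|.
   The stiff part of A (the entries proportional to z) is dissipative for the
   quadratic Lyapunov function
     V(d) = (d1 + 5/3 d2 + d3 + d4)^2 + 2 d2^2 + d3^2 + d4^2:
   along A d its derivative is z (-12 d2^2 + 4 d2 d3 - 2 d3^2 - 2 d4^2), which
   absorbs all O(1) coupling terms once z >= 20 + 120 L_h.  This yields the
   differential inequality V' <= C V + 25 E^2 with C = 20 + 120 L_h and E a bound
   for |e|, so a linear Gronwall argument gives V(d(t)) = O(E^2) on [t1, tau],
   and since |d| <= 7 sqrt V, |d(t)| = O(E) = O(1/z). *)

lemma has_real_derivative_vec_nth:
  assumes "(f has_vector_derivative D) F"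
  shows "((\<lambda>t. f t $ i) has_real_derivative D $ i) F"
proof -
  have "((\<lambda>t. f t $ i) has_derivative (\<lambda>h. (h *\<^sub>R D) $ i)) F"
    using bounded_linear.has_derivative[OF bounded_linear_vec_nth assms[unfolded has_vector_derivative_def]] .
  moreover have "(\<lambda>h. (h *\<^sub>R D) $ i) = (*) (D $ i)" by (rule ext) simp
  ultimately show ?thesis by (simp add: has_field_derivative_def)
qed

lemma matrix_vector_component_bound:
  fixes M :: "real^'n^'m"
  assumes "\<And>i j. \<bar>M$i$j\<bar> \<le> L"
  shows "\<bar>(M *v x)$i\<bar> \<le> L * (\<Sum>j\<in>UNIV. \<bar>x$j\<bar>)"
proof -
  have "\<bar>(M *v x)$i\<bar> \<le> (\<Sum>j\<in>UNIV. \<bar>M$i$j * x$j\<bar>)"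
    unfolding matrix_vector_mult_def by (simp add: sum_abs)
  also have "\<dots> \<le> (\<Sum>j\<in>UNIV. L * \<bar>x$j\<bar>)"
    by (intro sum_mono) (simp add: abs_mult mult_right_mono assms)
  finally show ?thesis by (simp add: sum_distrib_left)
qed

lemma perturbation_component_bound:
  fixes M :: "real^'n^'m" and x :: "real^'n" and e :: "real^'m"
  assumes "\<And>i j. \<bar>M$i$j\<bar> \<le> L" and "norm e \<le> E"
  shows "\<bar>(M *v x + e)$i\<bar> \<le> L * (\<Sum>j\<in>UNIV. \<bar>x$j\<bar>) + E"
proof -
  have "\<bar>(M *v x + e)$i\<bar> \<le> \<bar>(M *v x)$i\<bar> + \<bar>e$i\<bar>" by (simp add: abs_triangle_ineq)
  moreover have "\<bar>(M *v x)$i\<bar> \<le> L * (\<Sum>j\<in>UNIV. \<bar>x$j\<bar>)"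
    using assms(1) by (rule matrix_vector_component_bound)
  moreover have "\<bar>e$i\<bar> \<le> E" using component_le_norm_cart[of e i] assms(2) by linarith
  ultimately show ?thesis by linarith
qed

lemma difference_has_vector_derivative:
  fixes A :: "real^'n^'n" and h :: "real^'n \<Rightarrow> real^'n" and L :: "real^'n \<Rightarrow> real^'n \<Rightarrow> real^'n^'n"
  assumes h_lin: "\<And>x1 x2. h x1 - h x2 = L x1 x2 *v (x1 - x2)"
    and y: "(y has_vector_derivative (A *v y s + h (y s) + e)) F"
    and x: "(x has_vector_derivative (A *v x s + h (x s))) F"
  shows "((\<lambda>t. y t - x t) has_vector_derivative
           A *v (y s - x s) + (L (y s) (x s) *v (y s - x s) + e)) F"
proof -
  have eq: "(A *v y s + h (y s) + e) - (A *v x s + h (x s))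
      = A *v (y s - x s) + (L (y s) (x s) *v (y s - x s) + e)"
    using h_lin[of "y s" "x s"] by (simp add: matrix_vector_mult_diff_distrib algebra_simps)
  show ?thesis using has_vector_derivative_diff[OF y x] unfolding eq .
qed

(* Linear Gronwall inequality: W' <= C W + K on [a,b] with C, K >= 0 gives
   W t <= (W a + K (t - a)) exp (C (t - a)).  Proof: W s exp(-C(s-a)) - K(s-a) decreases. *)
lemma linear_differential_inequality:
  fixes W W' :: "real \<Rightarrow> real" and a b t C K :: real
  assumes C: "C \<ge> 0" and K: "K \<ge> 0" and t: "t \<in> {a..b}"
    and W_deriv: "\<And>s. s \<in> {a..b} \<Longrightarrow> (W has_real_derivative W' s) (at s within {a..b})"
    and W'_bound: "\<And>s. s \<in> {a..b} \<Longrightarrow> W' s \<le> C * W s + K"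
  shows "W t \<le> (W a + K * (t - a)) * exp (C * (t - a))"
proof -
  define g where "g s = W s * exp (-C * (s - a)) - K * (s - a)" for s
  define g' where "g' s = (W' s - C * W s) * exp (-C * (s - a)) - K" for s
  have g_deriv: "(g has_real_derivative g' s) (at s within {a..b})" if "s \<in> {a..b}" for s
    unfolding g_def[abs_def] g'_def
    by (rule derivative_eq_intros W_deriv[OF that] refl | simp)+ (simp add: algebra_simps)
  have g'_nonpos: "g' s \<le> 0" if s: "s \<in> {a..b}" for s
  proof -
    have decay: "exp (-C * (s - a)) \<le> 1" using s C by auto
    have "g' s \<le> K * exp (-C * (s - a)) - K"
      unfolding g'_def using W'_bound[OF s] by (intro diff_right_mono mult_right_mono) auto
    also have "\<dots> \<le> 0" using mult_left_mono[OF decay K] by simp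
    finally show ?thesis .
  qed
  have "g t \<le> g a"
  proof (rule DERIV_nonpos_imp_decreasing_open[of a t g])
    show "a \<le> t" using t by simp
    have "continuous_on {a..b} g"
      using g_deriv DERIV_continuous continuous_on_eq_continuous_within by blast
    thus "continuous_on {a..t} g" by (rule continuous_on_subset) (use t in auto)
    fix s assume s: "a < s" "s < t"
    hence "s \<in> {a..b}" "at s within {a..b} = at s" using t by (auto intro: at_within_Icc_at)
    thus "\<exists>y. (g has_real_derivative y) (at s) \<and> y \<le> 0" using g_deriv g'_nonpos by metis
  qed
  hence "W t * exp (-C * (t - a)) \<le> W a + K * (t - a)" unfolding g_def by simp
  hence "W t * exp (-C * (t - a)) * exp (C * (t - a)) \<le> (W a + K * (t - a)) * exp (C * (t - a))"
    by (intro mult_right_mono) auto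
  thus ?thesis by (simp add: mult.assoc exp_add[symmetric])
qed

lemma mult_le_of_abs_bounds:
  fixes x y A B :: real
  assumes "\<bar>x\<bar> \<le> A" "\<bar>y\<bar> \<le> B"
  shows "x * y \<le> A * B"
proof -
  have "x * y \<le> \<bar>x\<bar> * \<bar>y\<bar>" by (simp add: abs_mult[symmetric])
  also have "\<dots> \<le> A * B" using assms by (intro mult_mono) auto
  finally show ?thesis .
qed

lemma sum_four_sq_bound:
  fixes a b c e :: real
  shows "(a + b + c + e)^2 \<le> 4 * (a^2 + b^2 + c^2 + e^2)"
proof -
  have "0 \<le> (a-b)^2 + (a-c)^2 + (a-e)^2 + (b-c)^2 + (b-e)^2 + (c-e)^2" by simp
  thus ?thesis by (simp add: algebra_simps power2_eq_square)
qed

lemma abs_le_mult_sqrt: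
  fixes x c W :: real
  assumes "x^2 \<le> c^2 * W" "c \<ge> 0"
  shows "\<bar>x\<bar> \<le> c * sqrt W"
proof -
  have "\<bar>x\<bar> = sqrt (x^2)" by simp
  also have "\<dots> \<le> sqrt (c^2 * W)" using assms(1) by (rule real_sqrt_le_mono)
  also have "\<dots> = c * sqrt W" using assms(2) by (simp add: real_sqrt_mult)
  finally show ?thesis .
qed

lemma matA_rows:
  "(matA z *v x)$1 = -x$1 + 3*z*x$2 + z*x$3 + z*x$4"
  "(matA z *v x)$2 = -3*z*x$2"
  "(matA z *v x)$3 = 2*z*x$2 - z*x$3"
  "(matA z *v x)$4 = x$1 - z*x$4"
  by (simp_all add: matA_def matrix_vector_mult_def sum_4)

definition lyap :: "real^4 \<Rightarrow> real" where
  "lyap x = (x$1 + 5/3*x$2 + x$3 + x$4)^2 + 2*(x$2)^2 + (x$3)^2 + (x$4)^2"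

definition lyap_deriv :: "real^4 \<Rightarrow> real^4 \<Rightarrow> real" where
  "lyap_deriv x w = 2*(x$1 + 5/3*x$2 + x$3 + x$4)*(w$1 + 5/3*w$2 + w$3 + w$4)
     + 4*x$2*w$2 + 2*x$3*w$3 + 2*x$4*w$4"

lemma has_real_derivative_lyap:
  assumes "(d has_vector_derivative w) (at s within S)"
  shows "((\<lambda>t. lyap (d t)) has_real_derivative lyap_deriv (d s) w) (at s within S)"
proof -
  note c = has_real_derivative_vec_nth[OF assms]
  show ?thesis unfolding lyap_def lyap_deriv_def
    by (rule derivative_eq_intros c[of 1] c[of 2] c[of 3] c[of 4] refl | simp)+ (simp add: algebra_simps)
qed

lemma lyap_deriv_matA:
  "lyap_deriv d (matA z *v d + r)
     = z*(-12*(d$2)^2 + 4*d$2*d$3 - 2*(d$3)^2 - 2*(d$4)^2)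
       + (2*d$4*d$1 + 2*(d$1 + 5/3*d$2 + d$3 + d$4)*(r$1 + 5/3*r$2 + r$3 + r$4)
          + 4*d$2*r$2 + 2*d$3*r$3 + 2*d$4*r$4)"
  by (simp add: lyap_deriv_def matA_rows algebra_simps power2_eq_square)

lemma dissipation_bound:
  fixes a b c :: real
  shows "-12*a^2 + 4*a*b - 2*b^2 - 2*c^2 \<le> -(a^2 + b^2 + c^2)"
proof -
  have "0 \<le> (b - 2*a)^2 + 7*a^2 + c^2" by simp
  thus ?thesis by (simp add: algebra_simps power2_eq_square)
qed

lemma coupling_bound:
  fixes u d1 d2 d3 d4 r1 r2 r3 r4 Lh E :: real
  assumes Lh: "Lh \<ge> 0" and E: "E \<ge> 0"
    and u: "u = d1 + 5/3*d2 + d3 + d4"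
    and r1: "\<bar>r1\<bar> \<le> Lh * (\<bar>d1\<bar> + \<bar>d2\<bar> + \<bar>d3\<bar> + \<bar>d4\<bar>) + E"
    and r2: "\<bar>r2\<bar> \<le> Lh * (\<bar>d1\<bar> + \<bar>d2\<bar> + \<bar>d3\<bar> + \<bar>d4\<bar>) + E"
    and r3: "\<bar>r3\<bar> \<le> Lh * (\<bar>d1\<bar> + \<bar>d2\<bar> + \<bar>d3\<bar> + \<bar>d4\<bar>) + E"
    and r4: "\<bar>r4\<bar> \<le> Lh * (\<bar>d1\<bar> + \<bar>d2\<bar> + \<bar>d3\<bar> + \<bar>d4\<bar>) + E"
  shows "2*d4*d1 + 2*u*(r1 + 5/3*r2 + r3 + r4) + 4*d2*r2 + 2*d3*r3 + 2*d4*r4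
         \<le> (20 + 120*Lh) * (u^2 + d2^2 + d3^2 + d4^2) + 25*E^2"
proof -
  define Q where "Q = \<bar>u\<bar> + \<bar>d2\<bar> + \<bar>d3\<bar> + \<bar>d4\<bar>"
  define R where "R = 3*Lh*Q + E"
  have "d1 = u - 5/3*d2 - d3 - d4" using u by simp
  hence d1: "\<bar>d1\<bar> \<le> 2*Q" unfolding Q_def
    using abs_ge_self[of u] abs_ge_minus_self[of u] abs_ge_self[of d2] abs_ge_minus_self[of d2]
      abs_ge_self[of d3] abs_ge_minus_self[of d3] abs_ge_self[of d4] abs_ge_minus_self[of d4]
    by (simp add: abs_le_iff)
  have "Lh * (\<bar>d1\<bar> + \<bar>d2\<bar> + \<bar>d3\<bar> + \<bar>d4\<bar>) \<le> Lh * (3*Q)"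
    using d1 Lh abs_ge_zero[of u] unfolding Q_def by (intro mult_left_mono) (smt (verit))+
  hence r1R: "\<bar>r1\<bar> \<le> R" and r2R: "\<bar>r2\<bar> \<le> R" and r3R: "\<bar>r3\<bar> \<le> R" and r4R: "\<bar>r4\<bar> \<le> R"
    using r1 r2 r3 r4 unfolding R_def by linarith+
  hence "\<bar>r1 + 5/3*r2 + r3 + r4\<bar> \<le> 14/3 * R" by (simp only: abs_le_iff) linarith
  hence "u*(r1 + 5/3*r2 + r3 + r4) \<le> \<bar>u\<bar>*(14/3*R)" by (intro mult_le_of_abs_bounds) auto
  moreover have "d4*d1 \<le> Q*(2*Q)" using d1 by (intro mult_le_of_abs_bounds) (auto simp: Q_def)
  moreover have "d2*r2 \<le> \<bar>d2\<bar>*R" "d3*r3 \<le> \<bar>d3\<bar>*R" "d4*r4 \<le> \<bar>d4\<bar>*R"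
    using r2R r3R r4R by (intro mult_le_of_abs_bounds; simp)+
  ultimately have "2*d4*d1 + 2*u*(r1 + 5/3*r2 + r3 + r4) + 4*d2*r2 + 2*d3*r3 + 2*d4*r4
      \<le> 2*(Q*(2*Q)) + 2*(\<bar>u\<bar>*(14/3*R)) + 4*(\<bar>d2\<bar>*R) + 2*(\<bar>d3\<bar>*R) + 2*(\<bar>d4\<bar>*R)"
    by linarith
  also have "\<dots> = 4*Q^2 + (28/3*\<bar>u\<bar> + 4*\<bar>d2\<bar> + 2*\<bar>d3\<bar> + 2*\<bar>d4\<bar>)*R"
    by (simp add: algebra_simps power2_eq_square)
  also have "\<dots> \<le> 4*Q^2 + (10*Q)*R"
    using E Lh unfolding R_def by (intro add_left_mono mult_right_mono) (auto simp: Q_def)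
  also have "\<dots> = (4 + 30*Lh)*Q^2 + 10*Q*E" unfolding R_def by (simp add: algebra_simps power2_eq_square)
  also have "\<dots> \<le> (5 + 30*Lh)*Q^2 + 25*E^2"
    using sum_squares_ge_zero[of "Q - 5*E" 0] by (simp add: algebra_simps power2_eq_square)
  also have "\<dots> \<le> (5 + 30*Lh)*(4*(u^2 + d2^2 + d3^2 + d4^2)) + 25*E^2"
    using sum_four_sq_bound[of "\<bar>u\<bar>" "\<bar>d2\<bar>" "\<bar>d3\<bar>" "\<bar>d4\<bar>"] Lh unfolding Q_def
    by (intro add_right_mono mult_left_mono) auto
  finally show ?thesis by (simp add: algebra_simps)
qed

lemma lyap_deriv_matA_bound:
  fixes z Lh E :: real and d r :: "real^4"
  assumes Lh: "Lh \<ge> 0" and E: "E \<ge> 0" and z: "z \<ge> 20 + 120*Lh"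
    and r_bound: "\<And>k. \<bar>r$k\<bar> \<le> Lh * (\<Sum>j\<in>UNIV. \<bar>d$j\<bar>) + E"
  shows "lyap_deriv d (matA z *v d + r) \<le> (20 + 120*Lh) * lyap d + 25*E^2"
proof -
  have r: "\<bar>r$k\<bar> \<le> Lh * (\<bar>d$1\<bar> + \<bar>d$2\<bar> + \<bar>d$3\<bar> + \<bar>d$4\<bar>) + E" for k
    using r_bound[of k] by (simp add: sum_4)
  define u where "u = d$1 + 5/3*d$2 + d$3 + d$4"
  define F where "F = (d$2)^2 + (d$3)^2 + (d$4)^2"
  have F0: "F \<ge> 0" unfolding F_def by simp
  have "z*(-12*(d$2)^2 + 4*d$2*d$3 - 2*(d$3)^2 - 2*(d$4)^2) \<le> z*(-F)"
    using dissipation_bound z Lh unfolding F_def by (intro mult_left_mono) auto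
  also have "\<dots> \<le> (20 + 120*Lh)*(-F)"
    using z F0 by (intro mult_right_mono_neg) auto
  finally have dissipation: "z*(-12*(d$2)^2 + 4*d$2*d$3 - 2*(d$3)^2 - 2*(d$4)^2) \<le> (20 + 120*Lh)*(-F)" .
  have coupling: "2*d$4*d$1 + 2*u*(r$1 + 5/3*r$2 + r$3 + r$4) + 4*d$2*r$2 + 2*d$3*r$3 + 2*d$4*r$4
      \<le> (20 + 120*Lh)*(u^2 + F) + 25*E^2"
    using coupling_bound[OF Lh E u_def r[of 1] r[of 2] r[of 3] r[of 4]] unfolding F_def
    by (simp add: add.assoc)
  have "lyap_deriv d (matA z *v d + r) \<le> (20 + 120*Lh)*(-F) + ((20 + 120*Lh)*(u^2 + F) + 25*E^2)"
    using dissipation coupling unfolding lyap_deriv_matA u_def[symmetric] by linarith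
  also have "\<dots> = (20 + 120*Lh) * u^2 + 25*E^2" by (simp add: algebra_simps)
  also have "\<dots> \<le> (20 + 120*Lh) * lyap d + 25*E^2"
    using Lh unfolding lyap_def u_def by (intro add_right_mono mult_left_mono) auto
  finally show ?thesis .
qed

lemma norm_le_lyap: "norm x \<le> 7 * sqrt (lyap x)"
proof -
  define u where "u = x$1 + 5/3*x$2 + x$3 + x$4"
  have W: "lyap x = u^2 + 2*(x$2)^2 + (x$3)^2 + (x$4)^2" unfolding lyap_def u_def ..
  have "\<bar>x$1\<bar> \<le> 4 * sqrt (lyap x)"
  proof (rule abs_le_mult_sqrt)
    have "(x$1)^2 = (u + (-5/3*x$2) + (-x$3) + (-x$4))^2" unfolding u_def by simp
    also have "\<dots> \<le> 4*(u^2 + (-5/3*x$2)^2 + (-x$3)^2 + (-x$4)^2)" by (rule sum_four_sq_bound)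
    also have "\<dots> \<le> 4^2 * lyap x" unfolding W by (simp add: power2_eq_square)
    finally show "(x$1)^2 \<le> 4^2 * lyap x" .
  qed simp
  moreover have "\<bar>x$2\<bar> \<le> 1 * sqrt (lyap x)" "\<bar>x$3\<bar> \<le> 1 * sqrt (lyap x)"
      "\<bar>x$4\<bar> \<le> 1 * sqrt (lyap x)"
    by (intro abs_le_mult_sqrt; simp add: W)+
  moreover have "norm x \<le> \<bar>x$1\<bar> + \<bar>x$2\<bar> + \<bar>x$3\<bar> + \<bar>x$4\<bar>"
    using norm_le_l1_cart[of x] by (simp add: sum_4)
  ultimately show ?thesis by simp
qed

lemma deviation_estimate:
  fixes d r :: "real \<Rightarrow> real^4" and a b t z Lh E :: real
  assumes Lh: "Lh \<ge> 0" and E: "E \<ge> 0" and z: "z \<ge> 20 + 120*Lh"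
    and t: "t \<in> {a..b}" and d_start: "d a = 0"
    and d_ode: "\<And>s. s \<in> {a..b} \<Longrightarrow> (d has_vector_derivative matA z *v d s + r s) (at s within {a..b})"
    and r_bound: "\<And>s k. s \<in> {a..b} \<Longrightarrow> \<bar>r s $ k\<bar> \<le> Lh * (\<Sum>j\<in>UNIV. \<bar>d s $ j\<bar>) + E"
  shows "norm (d t) \<le> 35 * sqrt ((b - a) * exp ((20 + 120*Lh) * (b - a))) * E"
proof -
  define C where "C = 20 + 120*Lh"
  have C: "C \<ge> 0" using Lh unfolding C_def by simp
  have "lyap (d t) \<le> (lyap (d a) + 25*E^2 * (t - a)) * exp (C * (t - a))"
    using C t has_real_derivative_lyap[OF d_ode] lyap_deriv_matA_bound[OF Lh E z r_bound]
    unfolding C_def by (intro linear_differential_inequality[where W="\<lambda>s. lyap (d s)"]) auto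
  also have "\<dots> = 25*E^2 * ((t - a) * exp (C * (t - a)))" using d_start by (simp add: lyap_def)
  also have "\<dots> \<le> 25*E^2 * ((b - a) * exp (C * (b - a)))"
    using t C by (intro mult_left_mono mult_mono) (auto intro: mult_left_mono)
  finally have "lyap (d t) \<le> 35^2 * ((b - a) * exp (C * (b - a)) * E^2) / 7^2"
    by (simp add: algebra_simps)
  hence "7 * sqrt (lyap (d t)) \<le> 7 * sqrt (35^2 * ((b - a) * exp (C * (b - a)) * E^2) / 7^2)"
    by simp
  also have "\<dots> = 35 * sqrt ((b - a) * exp (C * (b - a))) * E"
    using E by (simp add: real_sqrt_mult real_sqrt_divide)
  finally show ?thesis using norm_le_lyap[of "d t"] unfolding C_def by linarith
qed

theorem mainTheorem10:
  fixes t1 \<tau> Lh :: real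
    and h :: "real^4 \<Rightarrow> real^4"
    and Lmat :: "real^4 \<Rightarrow> real^4 \<Rightarrow> real^4^4"
    and y xh e :: "real \<Rightarrow> real \<Rightarrow> real^4"
  assumes t1_lt: "t1 < \<tau>"
    and Lh_pos: "Lh > 0"
    and h_lin: "\<And>x1 x2. h x1 - h x2 = Lmat x1 x2 *v (x1 - x2)"
    and L_bound: "\<And>x1 x2 i j. \<bar>Lmat x1 x2 $ i $ j\<bar> \<le> Lh"
    and y_ode: "\<And>z t. z > 0 \<Longrightarrow> t \<in> {t1..\<tau>} \<Longrightarrow>
       (y z has_vector_derivative (matA z *v y z t + h (y z t) + e z t)) (at t within {t1..\<tau>})"
    and x_ode: "\<And>z t. z > 0 \<Longrightarrow> t \<in> {t1..\<tau>} \<Longrightarrow>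
       (xh z has_vector_derivative (matA z *v xh z t + h (xh z t))) (at t within {t1..\<tau>})"
    and init: "\<And>z. z > 0 \<Longrightarrow> xh z t1 = y z t1"
    and e_small: "\<exists>K z0. \<forall>z\<ge>z0. z > 0 \<longrightarrow> (\<forall>t\<in>{t1..\<tau>}. norm (e z t) \<le> K / z)"
  shows "\<exists>K z0. \<forall>z\<ge>z0. z > 0 \<longrightarrow> (\<forall>t\<in>{t1..\<tau>}. norm (y z t - xh z t) \<le> K / z)"
proof -
  obtain K0 z0 where K0: "\<And>z t. z \<ge> z0 \<Longrightarrow> z > 0 \<Longrightarrow> t \<in> {t1..\<tau>} \<Longrightarrow> norm (e z t) \<le> K0 / z"
    using e_small by blast
  define G where "G = 35 * sqrt ((\<tau> - t1) * exp ((20 + 120*Lh) * (\<tau> - t1)))"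
  have "norm (y z t - xh z t) \<le> (G * max K0 0) / z"
    if z: "z \<ge> max z0 (20 + 120*Lh)" "z > 0" and t: "t \<in> {t1..\<tau>}" for z t
  proof -
    have e_bound: "norm (e z s) \<le> max K0 0 / z" if "s \<in> {t1..\<tau>}" for s
    proof -
      have "K0 / z \<le> max K0 0 / z" using z(2) by (intro divide_right_mono) auto
      thus ?thesis using K0[OF _ z(2) that] z(1) by simp
    qed
    have "norm (y z t - xh z t) \<le> G * (max K0 0 / z)" unfolding G_def
    proof (rule deviation_estimate[where d="\<lambda>s. y z s - xh z s"
          and r="\<lambda>s. Lmat (y z s) (xh z s) *v (y z s - xh z s) + e z s"])
      fix s k assume s: "s \<in> {t1..\<tau>}"
      show "((\<lambda>s. y z s - xh z s) has_vector_derivative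
          matA z *v (y z s - xh z s) + (Lmat (y z s) (xh z s) *v (y z s - xh z s) + e z s))
          (at s within {t1..\<tau>})"
        by (rule difference_has_vector_derivative[OF h_lin y_ode[OF z(2) s] x_ode[OF z(2) s]])
      show "\<bar>(Lmat (y z s) (xh z s) *v (y z s - xh z s) + e z s) $ k\<bar>
          \<le> Lh * (\<Sum>j\<in>UNIV. \<bar>(y z s - xh z s) $ j\<bar>) + max K0 0 / z"
        by (rule perturbation_component_bound[OF L_bound e_bound[OF s]])
    qed (use Lh_pos z t init[OF z(2)] in simp_all)
    thus ?thesis by simp
  qed
  thus ?thesis by blast
qed

end
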